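(* Let $G=(V,E)$ be a finite simple graph and let $z:E\to[0,1]$ be any function. Then there is a function $x:E\to\{0,1\}$ such that for every vertex $v\in V$, $$\sum_{e\ni v}z(e)-1<\sum_{e\ni v}x(e)\le\sum_{e\ni v}z(e)+1,$$ where the sums range over the edges of $G$ incident with $v$. *)

theory Defs
  imports Complex_Main
begin

definition finite_simple_graph :: "'a set \<Rightarrow> 'a set set \<Rightarrow> bool" where
  "finite_simple_graph V E \<longleftrightarrow> finite V \<and> (\<forall>e\<in>E. e \<subseteq> V \<and> card e = 2)"

definition incident_edges :: "'a set set \<Rightarrow> 'a \<Rightarrow> 'a set set" where
  "incident_edges E v = {e \<in> E. v \<in> e}"

end

theory Submission
  imports Defs
begin

text \<open>Iterated rounding. Keep a point y of [0, 1]^E and call a vertex tight if at least two of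
  its edges are still fractional; tight vertices keep their sum equal to the target exactly.
  As long as fractional edges remain, one more of them is made integral without breaking this.
  If there are fewer tight vertices than fractional edges, the tightness equations have a
  nonzero solution supported on the fractional edges, and moving along it until the first
  edge hits 0 or 1 keeps them. Otherwise counting degrees shows that the fractional edges form
  a 2-regular graph on the tight vertices. If some fractional edge has both endpoints with
  fractional sum below 1, or both at least 1, rounding it to 0, resp. 1, changes the sum at
  either endpoint by less than 1. If not, signs +1 and -1 according to that alternative sum to
  zero on every fractional edge, so the tightness equations are dependent, one can be dropped,
  and the first case applies again. A vertex that stops being tight has at most one fractional
  edge left, which is how its final error stays within (-1, 1].\<close>

text \<open>Gaussian elimination: after solving equation v0 for the unknown d e0, equation v
  becomes the reduced equation with coefficients a v e - a v e0 * a v0 e / a v0 e0.\<close>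
lemma sum_eliminate_pivot:
  fixes a :: "'v \<Rightarrow> 'e \<Rightarrow> real" and d :: "'e \<Rightarrow> real"
  assumes F: "finite F" "e0 \<in> F" and pivot: "a v0 e0 \<noteq> 0"
  defines "d' \<equiv> d(e0 := - (\<Sum>e\<in>F - {e0}. a v0 e * d e) / a v0 e0)"
  shows "(\<Sum>e\<in>F. a v e * d' e) = (\<Sum>e\<in>F - {e0}. (a v e - a v e0 * a v0 e / a v0 e0) * d e)"
proof -
  define X where "X = (\<Sum>e\<in>F - {e0}. a v0 e * d e)"
  have "(\<Sum>e\<in>F. a v e * d' e) = a v e0 * d' e0 + (\<Sum>e\<in>F - {e0}. a v e * d' e)"
    using sum.remove[OF F] by blast
  also have "(\<Sum>e\<in>F - {e0}. a v e * d' e) = (\<Sum>e\<in>F - {e0}. a v e * d e)"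
    unfolding d'_def by (intro sum.cong) auto
  also have "a v e0 * d' e0 = - (a v e0 / a v0 e0) * X"
    unfolding d'_def X_def by simp
  also have "- (a v e0 / a v0 e0) * X + (\<Sum>e\<in>F - {e0}. a v e * d e)
      = (\<Sum>e\<in>F - {e0}. (a v e - a v e0 * a v0 e / a v0 e0) * d e)"
  proof -
    have "(\<Sum>e\<in>F - {e0}. a v e0 * a v0 e / a v0 e0 * d e) = (a v e0 / a v0 e0) * X"
      unfolding X_def sum_distrib_left by (intro sum.cong) auto
    then show ?thesis by (simp add: left_diff_distrib sum_subtractf)
  qed
  finally show ?thesis .
qed

lemma homogeneous_system_nontrivial_solution:
  fixes a :: "'v \<Rightarrow> 'e \<Rightarrow> real"
  assumes "finite T" "finite F" "card T < card F"
  shows "\<exists>d. (\<forall>e. e \<notin> F \<longrightarrow> d e = 0) \<and> (\<exists>e\<in>F. d e \<noteq> 0) \<and>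
             (\<forall>v\<in>T. (\<Sum>e\<in>F. a v e * d e) = 0)"
  using assms
proof (induction T arbitrary: F a rule: finite_induct)
  case empty
  then obtain e0 where "e0 \<in> F" by fastforce
  then show ?case by (intro exI[of _ "\<lambda>e. if e = e0 then 1 else 0"]) auto
next
  case (insert v0 T F a)
  show ?case
  proof (cases "\<forall>e\<in>F. a v0 e = 0")
    case True
    then show ?thesis using insert.IH[of F a] insert.prems insert.hyps by auto
  next
    case False
    then obtain e0 where e0: "e0 \<in> F" "a v0 e0 \<noteq> 0" by auto
    define a' where "a' v e = a v e - a v e0 * a v0 e / a v0 e0" for v e
    have "card T < card (F - {e0})" using insert e0 by simp
    then obtain d where d: "\<forall>e. e \<notin> F - {e0} \<longrightarrow> d e = 0" "\<exists>e\<in>F - {e0}. d e \<noteq> 0"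
      "\<forall>v\<in>T. (\<Sum>e\<in>F - {e0}. a' v e * d e) = 0"
      using insert.IH[of "F - {e0}" a'] insert.prems by auto
    define d' where "d' = d(e0 := - (\<Sum>e\<in>F - {e0}. a v0 e * d e) / a v0 e0)"
    have "(\<Sum>e\<in>F. a v e * d' e) = (\<Sum>e\<in>F - {e0}. a' v e * d e)" for v
      unfolding d'_def a'_def using sum_eliminate_pivot[where a = a and d = d, OF insert.prems(1) e0] .
    moreover have "a' v0 e = 0" for e
      unfolding a'_def using e0 by simp
    ultimately have "\<forall>v\<in>insert v0 T. (\<Sum>e\<in>F. a v e * d' e) = 0"
      using d(3) by simp
    moreover have "\<forall>e. e \<notin> F \<longrightarrow> d' e = 0" "\<exists>e\<in>F. d' e \<noteq> 0"
      using d(1,2) e0(1) by (auto simp: d'_def)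
    ultimately show ?thesis by blast
  qed
qed

lemma dependent_equation:
  fixes a :: "'v \<Rightarrow> 'e \<Rightarrow> real" and \<sigma> :: "'v \<Rightarrow> real"
  assumes T: "finite T" "v0 \<in> T" and "\<sigma> v0 \<noteq> 0"
    and dep: "\<forall>e\<in>F. (\<Sum>v\<in>T. \<sigma> v * a v e) = 0"
    and sol: "\<forall>v\<in>T - {v0}. (\<Sum>e\<in>F. a v e * d e) = 0"
  shows "(\<Sum>e\<in>F. a v0 e * d e) = 0"
proof -
  have "\<sigma> v0 * (\<Sum>e\<in>F. a v0 e * d e) = (\<Sum>v\<in>T. \<sigma> v * (\<Sum>e\<in>F. a v e * d e))"
    using sum.remove[OF T, of "\<lambda>v. \<sigma> v * (\<Sum>e\<in>F. a v e * d e)"] sol by simp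
  also have "\<dots> = (\<Sum>v\<in>T. \<Sum>e\<in>F. d e * (\<sigma> v * a v e))"
    by (simp add: sum_distrib_left mult_ac)
  also have "\<dots> = (\<Sum>e\<in>F. \<Sum>v\<in>T. d e * (\<sigma> v * a v e))"
    by (rule sum.swap)
  also have "\<dots> = (\<Sum>e\<in>F. d e * (\<Sum>v\<in>T. \<sigma> v * a v e))"
    by (simp add: sum_distrib_left)
  also have "\<dots> = 0" using dep by simp
  finally show ?thesis using \<open>\<sigma> v0 \<noteq> 0\<close> by simp
qed

lemma step_to_boundary:
  fixes y d :: "'e \<Rightarrow> real"
  assumes D: "finite D" "D \<noteq> {}" and frac: "\<forall>e\<in>D. 0 < y e \<and> y e < 1 \<and> d e \<noteq> 0"
  shows "\<exists>t>0. (\<forall>e\<in>D. 0 \<le> y e + t * d e \<and> y e + t * d e \<le> 1) \<and>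
               (\<exists>e\<in>D. y e + t * d e \<in> {0, 1})"
proof -
  define \<rho> where "\<rho> e = (if d e > 0 then (1 - y e) / d e else y e / (- d e))" for e
  define t where "t = Min (\<rho> ` D)"
  have "t \<in> \<rho> ` D" unfolding t_def using D by simp
  then obtain e1 where e1: "e1 \<in> D" "t = \<rho> e1" by auto
  have t_le: "t \<le> \<rho> e" if "e \<in> D" for e unfolding t_def using D that by simp
  have \<rho>_pos: "\<rho> e > 0" if "e \<in> D" for e
    using frac that unfolding \<rho>_def by (auto simp: field_simps)
  have t_pos: "t > 0" using \<rho>_pos e1 by simp
  have "0 \<le> y e + t * d e \<and> y e + t * d e \<le> 1" if e: "e \<in> D" for e
  proof (cases "d e > 0")
    case True
    have y_e: "0 < y e \<and> y e < 1" using frac e by auto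
    have "t * d e \<le> 1 - y e" using True t_le[OF e] by (simp add: \<rho>_def pos_le_divide_eq)
    moreover have "t * d e > 0" using True t_pos by simp
    ultimately show ?thesis using y_e by linarith
  next
    case False
    have y_e: "0 < y e \<and> y e < 1" and "d e \<noteq> 0" using frac e by auto
    with False have neg: "d e < 0" by simp
    then have "t * (- d e) \<le> y e" using t_le[OF e] by (simp add: \<rho>_def field_simps)
    moreover have "t * d e < 0" using neg t_pos by (simp add: mult_pos_neg)
    ultimately show ?thesis using y_e by linarith
  qed
  moreover have "y e1 + t * d e1 \<in> {0, 1}"
    using e1 frac by (auto simp: \<rho>_def field_simps)
  ultimately show ?thesis using t_pos e1(1) by blast
qed

locale graph_rounding =
  fixes V :: "'a set" and E :: "'a set set" and z :: "'a set \<Rightarrow> real"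
  assumes graph: "finite_simple_graph V E"
begin

lemma finite_vertices: "finite V"
  using graph by (simp add: finite_simple_graph_def)

lemma edge_subset: "e \<in> E \<Longrightarrow> e \<subseteq> V"
  using graph by (simp add: finite_simple_graph_def)

lemma card_edge: "e \<in> E \<Longrightarrow> card e = 2"
  using graph by (simp add: finite_simple_graph_def)

lemma finite_edges: "finite E"
  using finite_subset[of E "Pow V"] edge_subset finite_vertices by blast

lemma finite_incident_edges: "finite (incident_edges E v)"
  using finite_edges by (simp add: incident_edges_def)

definition target :: "'a \<Rightarrow> real" where
  "target v = (\<Sum>e\<in>incident_edges E v. z e)"

definition frac_edges :: "('a set \<Rightarrow> real) \<Rightarrow> 'a set set" where
  "frac_edges y = {e \<in> E. 0 < y e \<and> y e < 1}"

definition frac_at :: "('a set \<Rightarrow> real) \<Rightarrow> 'a \<Rightarrow> 'a set set" where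
  "frac_at y v = {e \<in> frac_edges y. v \<in> e}"

definition tight_vertices :: "('a set \<Rightarrow> real) \<Rightarrow> 'a set" where
  "tight_vertices y = {v \<in> V. 2 \<le> card (frac_at y v)}"

definition int_excess :: "('a set \<Rightarrow> real) \<Rightarrow> 'a \<Rightarrow> real" where
  "int_excess y v = (\<Sum>e\<in>incident_edges E v - frac_edges y. y e) - target v"

text \<open>However the fractional edges at a vertex get rounded later, its final sum minus the
  target lies between int_excess and int_excess plus their number; for non-tight vertices the
  invariant keeps this interval inside (-1, 1].\<close>
definition rounding_inv :: "('a set \<Rightarrow> real) \<Rightarrow> bool" where
  "rounding_inv y \<longleftrightarrow> (\<forall>e\<in>E. 0 \<le> y e \<and> y e \<le> 1) \<and>
     (\<forall>v\<in>tight_vertices y. (\<Sum>e\<in>incident_edges E v. y e) = target v) \<and>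
     (\<forall>v\<in>V - tight_vertices y. -1 < int_excess y v \<and> int_excess y v + card (frac_at y v) \<le> 1)"

lemma finite_frac_edges: "finite (frac_edges y)"
  using finite_edges by (simp add: frac_edges_def)

lemma finite_frac_at: "finite (frac_at y v)"
  using finite_frac_edges by (simp add: frac_at_def)

lemma frac_edges_mono:
  assumes "\<forall>e. e \<notin> frac_edges y \<longrightarrow> y' e = y e"
  shows "frac_edges y' \<subseteq> frac_edges y"
  using assms by (auto simp: frac_edges_def)

lemma sum_frac_at_bounds:
  shows "0 \<le> (\<Sum>e\<in>frac_at y v. y e)"
    and "frac_at y v \<noteq> {} \<Longrightarrow> (\<Sum>e\<in>frac_at y v. y e) < card (frac_at y v)"
proof -
  have frac: "0 < y e \<and> y e < 1" if "e \<in> frac_at y v" for e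
    using that by (simp add: frac_at_def frac_edges_def)
  show "0 \<le> (\<Sum>e\<in>frac_at y v. y e)"
    using frac by (simp add: sum_nonneg less_imp_le)
  show "(\<Sum>e\<in>frac_at y v. y e) < card (frac_at y v)" if "frac_at y v \<noteq> {}"
    using sum_strict_mono[OF finite_frac_at that, of y "\<lambda>_. 1"] frac by simp
qed

lemma incident_sum_split:
  "(\<Sum>e\<in>incident_edges E v. y e) = int_excess y v + target v + (\<Sum>e\<in>frac_at y v. y e)"
proof -
  have "incident_edges E v \<inter> frac_edges y = frac_at y v"
    by (auto simp: incident_edges_def frac_edges_def frac_at_def)
  then show ?thesis
    using sum.Int_Diff[OF finite_incident_edges, of y v "frac_edges y"] by (simp add: int_excess_def)
qed

lemma int_excess_bounds_if_tight:
  assumes "(\<Sum>e\<in>incident_edges E v. y e) = target v" and "card (frac_at y v) \<le> 1"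
  shows "-1 < int_excess y v \<and> int_excess y v + card (frac_at y v) \<le> 1"
proof -
  have excess: "int_excess y v = - (\<Sum>e\<in>frac_at y v. y e)"
    using incident_sum_split[of y v] assms(1) by simp
  show ?thesis
  proof (cases "frac_at y v = {}")
    case True
    then show ?thesis using excess by simp
  next
    case False
    then have "card (frac_at y v) = 1"
      using assms(2) finite_frac_at[of y v] card_0_eq[of "frac_at y v"] by linarith
    then show ?thesis using excess sum_frac_at_bounds[of y v] False by simp
  qed
qed

lemma int_excess_change:
  assumes off: "\<forall>e. e \<notin> frac_edges y \<longrightarrow> y' e = y e"
  shows "int_excess y' v = int_excess y v + (\<Sum>e\<in>frac_at y v - frac_at y' v. y' e)"
proof -
  have split: "incident_edges E v - frac_edges y'
      = (incident_edges E v - frac_edges y) \<union> (frac_at y v - frac_at y' v)"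
    using frac_edges_mono[OF off] by (auto simp: incident_edges_def frac_at_def frac_edges_def)
  have "(\<Sum>e\<in>incident_edges E v - frac_edges y. y' e) = (\<Sum>e\<in>incident_edges E v - frac_edges y. y e)"
    using off by (intro sum.cong) auto
  then show ?thesis
    unfolding int_excess_def split
    using finite_frac_at[of y v]
    by (subst sum.union_disjoint) (auto simp: finite_incident_edges frac_at_def)
qed

lemma rounding_inv_perturb:
  assumes inv: "rounding_inv y" and range: "\<forall>e\<in>E. 0 \<le> y' e \<and> y' e \<le> 1"
    and off: "\<forall>e. e \<notin> frac_edges y \<longrightarrow> y' e = y e"
    and tight: "\<forall>v\<in>tight_vertices y.
                  (\<Sum>e\<in>incident_edges E v. y' e) = (\<Sum>e\<in>incident_edges E v. y e)"
  shows "rounding_inv y'"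
proof -
  have sub: "frac_at y' v \<subseteq> frac_at y v" for v
    using frac_edges_mono[OF off] by (auto simp: frac_at_def)
  then have tight_sub: "tight_vertices y' \<subseteq> tight_vertices y"
    unfolding tight_vertices_def using card_mono[OF finite_frac_at sub] le_trans by blast
  have "-1 < int_excess y' v \<and> int_excess y' v + card (frac_at y' v) \<le> 1"
    if v: "v \<in> V - tight_vertices y'" for v
  proof (cases "v \<in> tight_vertices y")
    case True
    then show ?thesis
      using v inv tight int_excess_bounds_if_tight[of y' v]
      by (force simp: rounding_inv_def tight_vertices_def)
  next
    case False
    define R where "R = frac_at y v - frac_at y' v"
    have card_R: "card (frac_at y v) = card (frac_at y' v) + card R"
      unfolding R_def using card_Diff_subset[OF finite_frac_at sub] card_mono[OF finite_frac_at sub]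
      by simp
    have "R \<subseteq> E" by (auto simp: R_def frac_at_def frac_edges_def)
    then have "0 \<le> (\<Sum>e\<in>R. y' e)" "(\<Sum>e\<in>R. y' e) \<le> card R"
      using range sum_bounded_above[of R y' 1] by (auto intro: sum_nonneg)
    moreover have "-1 < int_excess y v \<and> int_excess y v + card (frac_at y v) \<le> 1"
      using inv v False by (simp add: rounding_inv_def)
    ultimately show ?thesis
      using int_excess_change[OF off, of v] card_R unfolding R_def by linarith
  qed
  then show ?thesis
    using range inv tight tight_sub by (auto simp: rounding_inv_def)
qed

lemma rounding_along_direction:
  fixes d :: "'a set \<Rightarrow> real"
  assumes inv: "rounding_inv y"
    and supp: "\<forall>e. e \<notin> frac_edges y \<longrightarrow> d e = 0" and nonzero: "\<exists>e\<in>frac_edges y. d e \<noteq> 0"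
    and tight: "\<forall>v\<in>tight_vertices y. (\<Sum>e\<in>incident_edges E v. d e) = 0"
  shows "\<exists>y'. rounding_inv y' \<and> card (frac_edges y') < card (frac_edges y)"
proof -
  define D where "D = {e \<in> frac_edges y. d e \<noteq> 0}"
  have "finite D" using finite_frac_edges[of y] by (simp add: D_def)
  moreover have "D \<noteq> {}" "\<forall>e\<in>D. 0 < y e \<and> y e < 1 \<and> d e \<noteq> 0"
    using nonzero by (auto simp: D_def frac_edges_def)
  ultimately obtain t e1 where t: "t > 0" "\<forall>e\<in>D. 0 \<le> y e + t * d e \<and> y e + t * d e \<le> 1"
    and e1: "e1 \<in> D" "y e1 + t * d e1 \<in> {0, 1}"
    using step_to_boundary by blast
  define y' where "y' e = y e + t * d e" for e
  have off: "\<forall>e. e \<notin> frac_edges y \<longrightarrow> y' e = y e"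
    using supp by (simp add: y'_def)
  have "\<forall>e\<in>E. 0 \<le> y' e \<and> y' e \<le> 1"
  proof
    fix e assume "e \<in> E"
    show "0 \<le> y' e \<and> y' e \<le> 1"
    proof (cases "e \<in> D")
      case True
      then show ?thesis using t(2) by (simp add: y'_def)
    next
      case False
      then have "d e = 0" using supp by (auto simp: D_def)
      then show ?thesis using inv \<open>e \<in> E\<close> by (simp add: y'_def rounding_inv_def)
    qed
  qed
  moreover have "(\<Sum>e\<in>incident_edges E v. y' e)
      = (\<Sum>e\<in>incident_edges E v. y e) + t * (\<Sum>e\<in>incident_edges E v. d e)" for v
    by (simp add: y'_def sum.distrib sum_distrib_left)
  ultimately have "rounding_inv y'"
    using rounding_inv_perturb[OF inv _ off] tight by simp
  moreover have "frac_edges y' \<subset> frac_edges y"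
  proof -
    have "e1 \<in> frac_edges y" "e1 \<notin> frac_edges y'"
      using e1 by (auto simp: D_def y'_def frac_edges_def)
    then show ?thesis using frac_edges_mono[OF off] by blast
  qed
  ultimately show ?thesis
    using psubset_card_mono[OF finite_frac_edges] by blast
qed

lemma frac_at_fun_upd_integral:
  assumes "r \<in> {0, 1}"
  shows "frac_at (y(e := r)) v = frac_at y v - {e}"
  using assms by (auto simp: frac_at_def frac_edges_def)

lemma fun_upd_away_from_vertex:
  assumes "v \<notin> e"
  shows "frac_at (y(e := r)) v = frac_at y v"
    and "(\<Sum>g\<in>incident_edges E v. (y(e := r)) g) = (\<Sum>g\<in>incident_edges E v. y g)"
    and "int_excess (y(e := r)) v = int_excess y v"
proof -
  have other: "g \<noteq> e" if "v \<in> g" for g using that assms by blast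
  show "frac_at (y(e := r)) v = frac_at y v"
    using other by (auto simp: frac_at_def frac_edges_def)
  show "(\<Sum>g\<in>incident_edges E v. (y(e := r)) g) = (\<Sum>g\<in>incident_edges E v. y g)"
    using other by (intro sum.cong) (auto simp: incident_edges_def)
  have "incident_edges E v - frac_edges (y(e := r)) = incident_edges E v - frac_edges y"
    using other by (auto simp: incident_edges_def frac_edges_def)
  then show "int_excess (y(e := r)) v = int_excess y v"
    using other unfolding int_excess_def by (auto simp: incident_edges_def intro!: sum.cong)
qed

text \<open>At a tight endpoint whose two fractional values sum to c, rounding the edge to r
  changes the excess from -c to r - c, which lies in (-1, 0] when c lies in [r, r + 1).\<close>
lemma round_edge_at_end:
  assumes inv: "rounding_inv y" and e: "e \<in> frac_edges y" and v: "v \<in> e" and r: "r \<in> {0, 1}"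
    and two: "card (frac_at y v) = 2"
    and between: "r \<le> (\<Sum>g\<in>frac_at y v. y g)" "(\<Sum>g\<in>frac_at y v. y g) < r + 1"
  shows "v \<notin> tight_vertices (y(e := r)) \<and> -1 < int_excess (y(e := r)) v \<and>
         int_excess (y(e := r)) v + card (frac_at (y(e := r)) v) \<le> 1"
proof -
  have e_at: "e \<in> frac_at y v" using e v by (simp add: frac_at_def)
  then have card1: "card (frac_at (y(e := r)) v) = 1"
    using two finite_frac_at[of y v] by (simp add: frac_at_fun_upd_integral[OF r])
  have "v \<in> tight_vertices y" using two v edge_subset e
    by (auto simp: tight_vertices_def frac_edges_def)
  then have "int_excess y v = - (\<Sum>g\<in>frac_at y v. y g)"
    using inv incident_sum_split[of y v] by (simp add: rounding_inv_def)
  moreover have "int_excess (y(e := r)) v = int_excess y v + r"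
  proof -
    have "frac_at y v - frac_at (y(e := r)) v = {e}"
      using e_at by (auto simp: frac_at_fun_upd_integral[OF r])
    then show ?thesis using int_excess_change[of y "y(e := r)" v] e by simp
  qed
  ultimately show ?thesis
    using card1 between by (simp add: tight_vertices_def)
qed

lemma round_edge:
  assumes inv: "rounding_inv y" and e: "e \<in> frac_edges y" and r: "r \<in> {0, 1}"
    and ends: "\<forall>v\<in>e. card (frac_at y v) = 2 \<and>
                 r \<le> (\<Sum>g\<in>frac_at y v. y g) \<and> (\<Sum>g\<in>frac_at y v. y g) < r + 1"
  shows "\<exists>y'. rounding_inv y' \<and> card (frac_edges y') < card (frac_edges y)"
proof -
  define y' where "y' = y(e := r)"
  have at_end: "v \<notin> tight_vertices y' \<and>
      -1 < int_excess y' v \<and> int_excess y' v + card (frac_at y' v) \<le> 1" if "v \<in> e" for v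
    using round_edge_at_end[OF inv e that r] ends that unfolding y'_def by simp
  have away: "v \<in> tight_vertices y' \<longleftrightarrow> v \<in> tight_vertices y" if "v \<notin> e" for v
    using fun_upd_away_from_vertex[OF that] by (simp add: y'_def tight_vertices_def)
  have "rounding_inv y'"
    unfolding rounding_inv_def
  proof (intro conjI ballI)
    show "0 \<le> y' g" "y' g \<le> 1" if "g \<in> E" for g
      using that inv r by (auto simp: y'_def rounding_inv_def)
  next
    fix v assume v: "v \<in> tight_vertices y'"
    then have "v \<notin> e" using at_end by blast
    then show "(\<Sum>g\<in>incident_edges E v. y' g) = target v"
      using v away inv fun_upd_away_from_vertex(2) by (simp add: y'_def rounding_inv_def)
  next
    fix v assume v: "v \<in> V - tight_vertices y'"
    have "-1 < int_excess y' v \<and> int_excess y' v + card (frac_at y' v) \<le> 1"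
    proof (cases "v \<in> e")
      case True
      then show ?thesis using at_end by blast
    next
      case False
      then show ?thesis using v away inv fun_upd_away_from_vertex[OF False]
        by (simp add: y'_def rounding_inv_def)
    qed
    then show "-1 < int_excess y' v" "int_excess y' v + card (frac_at y' v) \<le> 1" by simp_all
  qed
  moreover have "frac_edges y' = frac_edges y - {e}"
    using r by (auto simp: y'_def frac_edges_def)
  ultimately show ?thesis
    using card_Diff1_less[OF finite_frac_edges e] by auto
qed

lemma handshake:
  assumes "F \<subseteq> E"
  shows "(\<Sum>v\<in>V. card {e \<in> F. v \<in> e}) = 2 * card F"
proof -
  have "(\<Sum>v\<in>V. card {e \<in> F. v \<in> e}) = (\<Sum>v\<in>V. \<Sum>e\<in>F. of_bool (v \<in> e))"
    using finite_subset[OF assms finite_edges] by (simp add: sum.inter_filter[symmetric] Int_def)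
  also have "\<dots> = (\<Sum>e\<in>F. \<Sum>v\<in>V. of_bool (v \<in> e))"
    by (rule sum.swap)
  also have "\<dots> = (\<Sum>e\<in>F. card e)"
  proof (intro sum.cong refl)
    fix e assume "e \<in> F"
    then have "{v \<in> V. v \<in> e} = e" using assms edge_subset by auto
    then show "(\<Sum>v\<in>V. of_bool (v \<in> e)) = card e"
      using finite_vertices by (simp add: sum.inter_filter[symmetric] Int_def)
  qed
  also have "\<dots> = 2 * card F"
    using assms card_edge by (simp add: subset_iff)
  finally show ?thesis .
qed

lemma sum_card_frac_at: "(\<Sum>v\<in>V. card (frac_at y v)) = 2 * card (frac_edges y)"
  unfolding frac_at_def by (rule handshake) (auto simp: frac_edges_def)

lemma card_tight_vertices_le: "card (tight_vertices y) \<le> card (frac_edges y)"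
proof -
  have "2 * card (tight_vertices y) = (\<Sum>v\<in>tight_vertices y. 2)" by simp
  also have "\<dots> \<le> (\<Sum>v\<in>tight_vertices y. card (frac_at y v))"
    by (rule sum_mono) (simp add: tight_vertices_def)
  also have "\<dots> \<le> (\<Sum>v\<in>V. card (frac_at y v))"
    using finite_vertices by (intro sum_mono2) (auto simp: tight_vertices_def)
  finally show ?thesis by (simp add: sum_card_frac_at)
qed

text \<open>The hypothesis leaves no slack in the degree count
  2 * card (tight_vertices y) \<le> (\<Sum>v\<in>V. card (frac_at y v)) = 2 * card (frac_edges y).\<close>
lemma frac_edges_two_regular:
  assumes few: "card (frac_edges y) \<le> card (tight_vertices y)"
    and e: "e \<in> frac_edges y" and v: "v \<in> e"
  shows "v \<in> tight_vertices y \<and> card (frac_at y v) = 2"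
proof -
  define g where "g u = (if u \<in> tight_vertices y then 2 else 0 :: nat)" for u
  have g_le: "g u \<le> card (frac_at y u)" for u
    by (simp add: g_def tight_vertices_def)
  have "{u \<in> V. u \<in> tight_vertices y} = tight_vertices y"
    by (auto simp: tight_vertices_def)
  then have "(\<Sum>u\<in>V. g u) = 2 * card (tight_vertices y)"
    using finite_vertices sum.inter_filter[of V "\<lambda>_. 2::nat" "\<lambda>u. u \<in> tight_vertices y"]
    by (simp add: g_def)
  then have "(\<Sum>u\<in>V. card (frac_at y u)) \<le> (\<Sum>u\<in>V. g u)"
    using few sum_card_frac_at by simp
  then have sums_eq: "(\<Sum>u\<in>V. g u) = (\<Sum>u\<in>V. card (frac_at y u))"
    using sum_mono[of V g, OF g_le] by linarith
  have "v \<in> V" using e v edge_subset by (auto simp: frac_edges_def)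
  then have "g v = card (frac_at y v)"
    using sum_mono_inv[OF sums_eq] g_le finite_vertices by simp
  moreover have "card (frac_at y v) \<noteq> 0"
    using e v finite_frac_at[of y v] by (auto simp: frac_at_def)
  ultimately show ?thesis by (auto simp: g_def split: if_splits)
qed

lemma incident_sum_eq_indicator_sum:
  fixes d :: "'a set \<Rightarrow> real"
  assumes "F \<subseteq> E" "finite F" "\<forall>e. e \<notin> F \<longrightarrow> d e = 0"
  shows "(\<Sum>e\<in>incident_edges E v. d e) = (\<Sum>e\<in>F. of_bool (v \<in> e) * d e)"
proof -
  have "(\<Sum>e\<in>incident_edges E v. d e) = (\<Sum>e\<in>{e \<in> F. v \<in> e}. d e)"
    using assms by (intro sum.mono_neutral_right finite_incident_edges) (auto simp: incident_edges_def)
  also have "\<dots> = (\<Sum>e\<in>F. of_bool (v \<in> e) * d e)"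
    using assms(2) by (simp add: sum.inter_filter[symmetric] Int_def)
  finally show ?thesis .
qed

lemma rounding_along_kernel:
  fixes d :: "'a set \<Rightarrow> real"
  assumes inv: "rounding_inv y" and supp: "\<forall>e. e \<notin> frac_edges y \<longrightarrow> d e = 0"
    and nonzero: "\<exists>e\<in>frac_edges y. d e \<noteq> 0"
    and kernel: "\<forall>v\<in>tight_vertices y. (\<Sum>e\<in>frac_edges y. of_bool (v \<in> e) * d e) = 0"
  shows "\<exists>y'. rounding_inv y' \<and> card (frac_edges y') < card (frac_edges y)"
proof (rule rounding_along_direction[OF inv supp nonzero])
  have "frac_edges y \<subseteq> E" by (auto simp: frac_edges_def)
  then show "\<forall>v\<in>tight_vertices y. (\<Sum>e\<in>incident_edges E v. d e) = 0"
    using kernel incident_sum_eq_indicator_sum[OF _ finite_frac_edges supp] by simp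
qed

text \<open>A vertex weighting that is nonzero everywhere and sums to zero on each fractional edge
  makes the tightness equations linearly dependent, so one of them may be dropped.\<close>
lemma rounding_step_balanced:
  fixes \<sigma> :: "'a \<Rightarrow> real"
  assumes inv: "rounding_inv y" and ne: "frac_edges y \<noteq> {}"
    and ends_tight: "\<forall>e\<in>frac_edges y. e \<subseteq> tight_vertices y"
    and balanced: "\<forall>e\<in>frac_edges y. (\<Sum>v\<in>e. \<sigma> v) = 0" and nonzero: "\<forall>v. \<sigma> v \<noteq> 0"
  shows "\<exists>y'. rounding_inv y' \<and> card (frac_edges y') < card (frac_edges y)"
proof -
  define T where "T = tight_vertices y"
  have fin_T: "finite T"
    using finite_vertices by (simp add: T_def tight_vertices_def)
  obtain e1 where e1: "e1 \<in> frac_edges y" using ne by blast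
  then have "card e1 = 2" using card_edge by (simp add: frac_edges_def)
  then obtain v0 where "v0 \<in> e1" by fastforce
  then have v0: "v0 \<in> T" using e1 ends_tight by (auto simp: T_def)
  moreover have "0 < card T" using fin_T v0 card_gt_0_iff by blast
  ultimately have "card (T - {v0}) < card (frac_edges y)"
    using fin_T card_tight_vertices_le[of y] by (simp add: T_def)
  then obtain d :: "'a set \<Rightarrow> real"
    where d: "\<forall>e. e \<notin> frac_edges y \<longrightarrow> d e = 0" "\<exists>e\<in>frac_edges y. d e \<noteq> 0"
    and rows: "\<forall>v\<in>T - {v0}. (\<Sum>e\<in>frac_edges y. of_bool (v \<in> e) * d e) = 0"
    using homogeneous_system_nontrivial_solution[OF finite_Diff[OF fin_T] finite_frac_edges,
        where a = "\<lambda>v e. of_bool (v \<in> e)"] by blast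
  have "(\<Sum>v\<in>T. \<sigma> v * of_bool (v \<in> e)) = 0" if e: "e \<in> frac_edges y" for e
  proof -
    have "{v \<in> T. v \<in> e} = e" "T \<inter> e = e" using e ends_tight by (auto simp: T_def)
    then show ?thesis
      using fin_T balanced e sum.inter_filter[OF fin_T, of \<sigma> "\<lambda>v. v \<in> e"] by simp
  qed
  then have "(\<Sum>e\<in>frac_edges y. of_bool (v0 \<in> e) * d e) = 0"
    using dependent_equation[OF fin_T v0 _ _ rows] nonzero by blast
  then have "\<forall>v\<in>tight_vertices y. (\<Sum>e\<in>frac_edges y. of_bool (v \<in> e) * d e) = 0"
    using rows by (auto simp: T_def)
  then show ?thesis using rounding_along_kernel[OF inv d] by blast
qed

lemma rounding_step_two_regular:
  assumes inv: "rounding_inv y" and ne: "frac_edges y \<noteq> {}"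
    and regular: "\<And>e v. e \<in> frac_edges y \<Longrightarrow> v \<in> e \<Longrightarrow>
                    v \<in> tight_vertices y \<and> card (frac_at y v) = 2"
  shows "\<exists>y'. rounding_inv y' \<and> card (frac_edges y') < card (frac_edges y)"
proof -
  define c where "c v = (\<Sum>g\<in>frac_at y v. y g)" for v
  have c_bounds: "0 \<le> c v \<and> c v < 2" if "e \<in> frac_edges y" "v \<in> e" for e v
  proof -
    have "frac_at y v \<noteq> {}" using that by (auto simp: frac_at_def)
    then show ?thesis
      using sum_frac_at_bounds[of y v] regular[OF that] by (simp add: c_def)
  qed
  show ?thesis
  proof (cases "\<exists>e\<in>frac_edges y. \<exists>r\<in>{0, 1}. \<forall>v\<in>e. r \<le> c v \<and> c v < r + 1")
    case True
    then obtain e r where e: "e \<in> frac_edges y" and r: "r \<in> {0, 1}"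
      and between: "\<forall>v\<in>e. r \<le> c v \<and> c v < r + 1" by blast
    have "\<forall>v\<in>e. card (frac_at y v) = 2 \<and>
        r \<le> (\<Sum>g\<in>frac_at y v. y g) \<and> (\<Sum>g\<in>frac_at y v. y g) < r + 1"
      using between regular[OF e] by (simp add: c_def)
    then show ?thesis by (rule round_edge[OF inv e r])
  next
    case False
    define \<sigma> where "\<sigma> v = (if 1 \<le> c v then 1 else -1 :: real)" for v
    have balanced: "\<forall>e\<in>frac_edges y. (\<Sum>v\<in>e. \<sigma> v) = 0"
    proof
      fix e assume e: "e \<in> frac_edges y"
      have "card e = 2" using e card_edge by (simp add: frac_edges_def)
      then obtain p q where pq: "e = {p, q}" "p \<noteq> q" by (auto simp: card_2_iff)
      have "\<not> (\<forall>v\<in>e. 0 \<le> c v \<and> c v < 0 + 1)" "\<not> (\<forall>v\<in>e. 1 \<le> c v \<and> c v < 1 + 1)"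
        using False e by blast+
      moreover have "0 \<le> c p \<and> c p < 2" "0 \<le> c q \<and> c q < 2"
        using c_bounds[OF e] pq by simp_all
      ultimately have "(1 \<le> c p) \<noteq> (1 \<le> c q)"
        using pq by auto
      then show "(\<Sum>v\<in>e. \<sigma> v) = 0" using pq by (auto simp: \<sigma>_def)
    qed
    have "\<forall>e\<in>frac_edges y. e \<subseteq> tight_vertices y" using regular by blast
    moreover have "\<forall>v. \<sigma> v \<noteq> 0" by (simp add: \<sigma>_def)
    ultimately show ?thesis
      using rounding_step_balanced[OF inv ne _ balanced] by blast
  qed
qed

lemma rounding_step:
  assumes inv: "rounding_inv y" and ne: "frac_edges y \<noteq> {}"
  shows "\<exists>y'. rounding_inv y' \<and> card (frac_edges y') < card (frac_edges y)"
proof (cases "card (tight_vertices y) < card (frac_edges y)")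
  case True
  have "finite (tight_vertices y)"
    using finite_vertices by (simp add: tight_vertices_def)
  then obtain d :: "'a set \<Rightarrow> real"
    where "\<forall>e. e \<notin> frac_edges y \<longrightarrow> d e = 0" "\<exists>e\<in>frac_edges y. d e \<noteq> 0"
      "\<forall>v\<in>tight_vertices y. (\<Sum>e\<in>frac_edges y. of_bool (v \<in> e) * d e) = 0"
    using homogeneous_system_nontrivial_solution[OF _ finite_frac_edges True,
        where a = "\<lambda>v e. of_bool (v \<in> e)"] by blast
  then show ?thesis by (rule rounding_along_kernel[OF inv])
next
  case False
  then show ?thesis
    using rounding_step_two_regular[OF inv ne] frac_edges_two_regular by simp
qed

lemma integral_rounding_exists:
  assumes "rounding_inv y"
  shows "\<exists>x. (\<forall>e\<in>E. x e \<in> {0, 1}) \<and> (\<forall>v\<in>V.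
           target v - 1 < (\<Sum>e\<in>incident_edges E v. x e) \<and> (\<Sum>e\<in>incident_edges E v. x e) \<le> target v + 1)"
  using assms
proof (induction "card (frac_edges y)" arbitrary: y rule: less_induct)
  case less
  show ?case
  proof (cases "frac_edges y = {}")
    case False
    then obtain y' where "rounding_inv y'" "card (frac_edges y') < card (frac_edges y)"
      using rounding_step[OF less.prems] by blast
    then show ?thesis using less.hyps by blast
  next
    case True
    then have "frac_at y v = {}" "v \<notin> tight_vertices y" for v
      by (simp_all add: frac_at_def tight_vertices_def)
    moreover have "\<forall>v\<in>V - tight_vertices y.
        -1 < int_excess y v \<and> int_excess y v + card (frac_at y v) \<le> 1"
      using less.prems unfolding rounding_inv_def by blast
    ultimately have excess: "-1 < int_excess y v \<and> int_excess y v \<le> 1" if "v \<in> V" for v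
      using that by simp
    have "target v - 1 < (\<Sum>e\<in>incident_edges E v. y e) \<and> (\<Sum>e\<in>incident_edges E v. y e) \<le> target v + 1"
      if "v \<in> V" for v
      using excess[OF that] True by (simp add: int_excess_def)
    moreover have "y e \<in> {0, 1}" if "e \<in> E" for e
    proof -
      have "0 \<le> y e" "y e \<le> 1" using less.prems that by (simp_all add: rounding_inv_def)
      moreover have "e \<notin> frac_edges y" using True by simp
      ultimately show ?thesis using that by (auto simp: frac_edges_def)
    qed
    ultimately show ?thesis by (intro exI[of _ y]) blast
  qed
qed

lemma rounding_inv_initial:
  assumes "\<forall>e\<in>E. 0 \<le> z e \<and> z e \<le> 1"
  shows "rounding_inv z"
proof -
  have "-1 < int_excess z v \<and> int_excess z v + card (frac_at z v) \<le> 1"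
    if "v \<in> V - tight_vertices z" for v
    using that int_excess_bounds_if_tight[of z v] by (auto simp: target_def tight_vertices_def)
  then show ?thesis using assms by (simp add: rounding_inv_def target_def)
qed

end

theorem lemma4p1:
  fixes V :: "'a set" and E :: "'a set set" and z :: "'a set \<Rightarrow> real"
  assumes "finite_simple_graph V E"
    and "\<forall>e\<in>E. 0 \<le> z e \<and> z e \<le> 1"
  shows "\<exists>x :: 'a set \<Rightarrow> real. (\<forall>e\<in>E. x e \<in> {0, 1}) \<and>
           (\<forall>v\<in>V. (\<Sum>e\<in>incident_edges E v. z e) - 1 < (\<Sum>e\<in>incident_edges E v. x e) \<and>
                   (\<Sum>e\<in>incident_edges E v. x e) \<le> (\<Sum>e\<in>incident_edges E v. z e) + 1)"
proof -
  interpret graph_rounding V E z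
    using assms(1) by unfold_locales
  show ?thesis
    using integral_rounding_exists[OF rounding_inv_initial[OF assms(2)]] by (simp add: target_def)
qed

end
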